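(* Let $p$ be an odd prime and let $d \geq 3$ be an odd integer. Suppose there exists a positive integer $t$ with $p^t \equiv -1 \pmod d$, and take $t$ minimal. Let $q=p^v \equiv 1 \pmod{2d}$. Then $v=2ts$ for some positive integer $s$. If $s$ is even, then $\omega\big(GP(q,d)\big)<\sqrt{q}$. If $s$ is odd, then $d \mid (\sqrt{q}+1)$ and $\omega\big(GP(q,d)\big)=\sqrt{q}$.
   Context: $GP(q,d)$ is the graph on $\mathbb{F}_q$ in which distinct $x,y$ are adjacent iff $x-y$ is a $d$-th power in $\mathbb{F}_q^*$; $\omega$ denotes clique number. *)

theory Defs
  imports Complex_Main "HOL-Number_Theory.Number_Theory"
begin

definition gp_adj :: "nat \<Rightarrow> 'a::field \<Rightarrow> 'a \<Rightarrow> bool" where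
  "gp_adj d x y \<longleftrightarrow> x \<noteq> y \<and> (\<exists>z. z \<noteq> 0 \<and> x - y = z ^ d)"

definition gp_clique :: "nat \<Rightarrow> 'a::field set \<Rightarrow> bool" where
  "gp_clique d S \<longleftrightarrow> (\<forall>x\<in>S. \<forall>y\<in>S. x \<noteq> y \<longrightarrow> gp_adj d x y)"

definition gp_clique_number :: "'a::{field,finite} itself \<Rightarrow> nat \<Rightarrow> nat" where
  "gp_clique_number _ d = Max {card S | S :: 'a set. gp_clique d S}"

end

theory Submission
  imports Defs "HOL-Computational_Algebra.Polynomial" "HOL-Library.Cardinality"
begin

text \<open>
  Let \<open>D\<close> be the group of nonzero \<open>d\<close>-th powers of \<open>F\<^sub>q\<close>; it has index \<open>d\<close> in
  \<open>F\<^sub>q\<^sup>*\<close> when \<open>d\<close> divides \<open>q - 1\<close>. If \<open>S\<close> is a clique and \<open>c\<close> is a nonzero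
  non-\<open>d\<close>-th power, then \<open>(x, y) \<mapsto> x - c y\<close> is injective on \<open>S \<times> S\<close>, because
  \<open>x\<^sub>1 - x\<^sub>2 = c (y\<^sub>1 - y\<^sub>2)\<close> would make \<open>c\<close> a quotient of two \<open>d\<close>-th powers;
  hence \<open>|S|\<^sup>2 \<le> q\<close>. If \<open>|S| = \<surd>q\<close> all these maps are bijections. Translating so that
  \<open>0 \<in> S\<close> and fixing \<open>z \<notin> S\<close>, the map \<open>(x, y) \<mapsto> (x - z) / y\<close> is then a bijection from
  \<open>N \<times> (S - {0})\<close> onto a coset \<open>c D\<close>, where \<open>N = {x \<in> S. x - z \<in> c D}\<close>; counting gives
  \<open>|N| (\<surd>q - 1) = (q - 1) / d\<close>, i.e. \<open>d\<close> divides \<open>\<surd>q + 1\<close>.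

  Conversely, if \<open>d\<close> divides \<open>\<surd>q + 1\<close> and \<open>\<surd>q\<close> is a power of the characteristic,
  every nonzero element \<open>w\<close> of the subfield \<open>{x. x\<^bsup>\<surd>q\<^esup> = x}\<close> satisfies
  \<open>w\<^bsup>(q-1)/d\<^esup> = 1\<close>, so it is a \<open>d\<close>-th power, and that subfield is a clique of size \<open>\<surd>q\<close>.

  Finally, minimality of \<open>t\<close> makes \<open>2t\<close> the order of \<open>p\<close> modulo \<open>d\<close>, so \<open>v = 2ts\<close> and
  \<open>\<surd>q = p\<^bsup>ts\<^esup> \<equiv> (-1)\<^sup>s (mod d)\<close>.
\<close>

text \<open>
  The library's \<open>finite_field_power_card_eq_same\<close> is stated for the class \<open>finite_field\<close>,
  which a type variable of sort \<open>{field, finite}\<close> does not belong to.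
\<close>

lemma finite_field_power_card_minus_one:
  fixes x :: "'a::{field,finite}"
  assumes "x \<noteq> 0"
  shows "x ^ (CARD('a) - 1) = 1"
proof -
  let ?U = "UNIV - {0::'a}"
  have "(\<Prod>y\<in>?U. x * y) = (\<Prod>y\<in>?U. y)"
    using assms by (intro prod.reindex_bij_witness[of _ "\<lambda>y. y / x" "(*) x"]) auto
  moreover have "(\<Prod>y\<in>?U. x * y) = x ^ card ?U * (\<Prod>y\<in>?U. y)"
    by (simp add: prod.distrib)
  moreover have "(\<Prod>y\<in>?U. y) \<noteq> 0"
    by simp
  ultimately show ?thesis
    by (simp add: card_Diff_singleton)
qed

lemma finite_field_power_card:
  fixes x :: "'a::{field,finite}"
  shows "x ^ CARD('a) = x"
proof -
  have "CARD('a) = Suc (CARD('a) - 1)"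
    using finite_UNIV_card_ge_0 by fastforce
  then have "x ^ CARD('a) = x * x ^ (CARD('a) - 1)"
    by (metis power_Suc)
  then show ?thesis
    using finite_field_power_card_minus_one[of x] by (cases "x = 0") auto
qed

lemma two_le_card_field: "2 \<le> CARD('a::{field,finite})"
proof -
  have "card {0, 1::'a} \<le> CARD('a)"
    by (rule card_mono) auto
  then show ?thesis
    by simp
qed

lemma two_le_sqrt_card:
  assumes "m * m = CARD('a::{field,finite})"
  shows "2 \<le> m"
proof (rule ccontr)
  assume "\<not> 2 \<le> m"
  then have "m * m < 2"
    by (cases m) auto
  then show False
    using assms two_le_card_field[where 'a = 'a] by simp
qed

lemma prime_CHAR_finite_field: "prime CHAR('a::{field,finite})"
  using prime_CHAR_semidom finite_imp_CHAR_pos[OF finite_class.finite_UNIV] by blast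

lemma CHAR_eq_if_card_eq_prime_power:
  assumes "prime p" and "CARD('a::{field,finite}) = p ^ v"
  shows "CHAR('a) = p"
proof -
  have "CHAR('a) dvd p ^ v"
    using CHAR_dvd_CARD assms(2) by metis
  then show ?thesis
    using assms(1) prime_CHAR_finite_field prime_dvd_power primes_dvd_imp_eq by blast
qed

lemma power_CHAR_power_diff:
  fixes x y :: "'a::comm_ring_1"
  assumes "prime CHAR('a)" and "m = CHAR('a) ^ k"
  shows "(x - y) ^ m = x ^ m - y ^ m"
proof -
  have "(- y) ^ (CHAR('a) ^ k) = - (y ^ (CHAR('a) ^ k))" for y :: 'a
  proof (induction k arbitrary: y)
    case (Suc k)
    then show ?case
      by (simp add: power_mult minus_power_prime_CHAR[OF refl assms(1)])
  qed simp
  then show ?thesis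
    using freshmans_dream'[OF assms, of x "- y"] assms(2) by simp
qed

lemma card_roots_power_eq_le:
  fixes c :: "'a::idom"
  assumes "n > 0"
  shows "card {z. z ^ n = c} \<le> n"
proof -
  define f where "f = monom 1 n - [:c:]"
  have "coeff f n = 1"
    using assms by (cases n) (simp_all add: f_def)
  then have "f \<noteq> 0"
    by auto
  moreover have "degree f \<le> n"
    unfolding f_def by (metis degree_diff_le degree_monom_le degree_pCons_0 le0)
  moreover have "{z. z ^ n = c} = {z. poly f z = 0}"
    by (auto simp: f_def poly_monom)
  ultimately show ?thesis
    using card_poly_roots_bound[of f] by simp
qed

definition nonzero_powers :: "nat \<Rightarrow> 'a::field set" where
  "nonzero_powers d = (\<lambda>z. z ^ d) ` (UNIV - {0})"

lemma gp_adj_iff_nonzero_powers: "gp_adj d x y \<longleftrightarrow> x \<noteq> y \<and> x - y \<in> nonzero_powers d"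
  by (auto simp: gp_adj_def nonzero_powers_def)

lemma zero_notin_nonzero_powers: "0 \<notin> nonzero_powers d"
  by (auto simp: nonzero_powers_def)

lemma nonzero_powers_mult:
  assumes "a \<in> nonzero_powers d" and "b \<in> nonzero_powers d"
  shows "a * b \<in> nonzero_powers d"
proof -
  obtain u w where "u \<noteq> 0" "a = u ^ d" "w \<noteq> 0" "b = w ^ d"
    using assms by (auto simp: nonzero_powers_def)
  then show ?thesis
    unfolding nonzero_powers_def by (intro image_eqI[of _ _ "u * w"]) (auto simp: power_mult_distrib)
qed

lemma nonzero_powers_divide:
  assumes "a \<in> nonzero_powers d" and "b \<in> nonzero_powers d"
  shows "a / b \<in> nonzero_powers d"
proof -
  obtain u w where "u \<noteq> 0" "a = u ^ d" "w \<noteq> 0" "b = w ^ d"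
    using assms by (auto simp: nonzero_powers_def)
  then show ?thesis
    unfolding nonzero_powers_def by (intro image_eqI[of _ _ "u / w"]) (auto simp: power_divide)
qed

lemma card_nonzero_powers_ge:
  assumes "d > 0"
  shows "(CARD('a::{field,finite}) - 1) div d \<le> card (nonzero_powers d :: 'a set)"
proof -
  let ?P = "nonzero_powers d :: 'a set"
  have "UNIV - {0::'a} \<subseteq> (\<Union>y\<in>?P. {z. z ^ d = y})"
    by (auto simp: nonzero_powers_def)
  then have "CARD('a) - 1 \<le> card (\<Union>y\<in>?P. {z. z ^ d = y})"
    by (metis card_Diff_singleton card_mono finite UNIV_I)
  also have "\<dots> \<le> (\<Sum>y\<in>?P. card {z. z ^ d = y})"
    by (rule card_UN_le) simp
  also have "\<dots> \<le> of_nat (card ?P) * d"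
    by (rule sum_bounded_above) (rule card_roots_power_eq_le[OF assms])
  also have "\<dots> = card ?P * d"
    by simp
  finally have "CARD('a) - 1 \<le> card ?P * d" .
  then show ?thesis
    using div_le_mono[of "CARD('a) - 1" "card ?P * d" d] assms by simp
qed

lemma nonzero_powers_eq_roots_of_unity:
  assumes "d > 0" and "d dvd CARD('a::{field,finite}) - 1"
  shows "(nonzero_powers d :: 'a set) = {y. y ^ ((CARD('a) - 1) div d) = 1}"
    and "card (nonzero_powers d :: 'a set) = (CARD('a) - 1) div d"
proof -
  define e where "e = (CARD('a) - 1) div d"
  let ?P = "nonzero_powers d :: 'a set" and ?R = "{y::'a. y ^ e = 1}"
  have "e * d = CARD('a) - 1"
    using assms(2) by (simp add: e_def)
  then have "e > 0"
    using two_le_card_field[where 'a = 'a] by (cases e) auto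
  have "?P \<subseteq> ?R"
  proof
    fix y assume "y \<in> ?P"
    then obtain z where "z \<noteq> 0" "y = z ^ d"
      by (auto simp: nonzero_powers_def)
    then show "y \<in> ?R"
      using assms(2) finite_field_power_card_minus_one[of z]
      by (simp add: e_def flip: power_mult)
  qed
  moreover have "card ?R \<le> e"
    using card_roots_power_eq_le[OF \<open>e > 0\<close>] .
  moreover have "e \<le> card ?P"
    unfolding e_def using card_nonzero_powers_ge[OF assms(1)] .
  ultimately have "card ?P = card ?R" "card ?P = e"
    using card_mono[OF finite \<open>?P \<subseteq> ?R\<close>] by linarith+
  then show "?P = {y. y ^ ((CARD('a) - 1) div d) = 1}" "card ?P = (CARD('a) - 1) div d"
    using card_subset_eq[OF finite \<open>?P \<subseteq> ?R\<close>] by (simp_all add: e_def)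
qed

lemma exists_notin_nonzero_powers:
  assumes "1 < d" and "d dvd CARD('a::{field,finite}) - 1"
  shows "\<exists>c::'a. c \<noteq> 0 \<and> c \<notin> nonzero_powers d"
proof -
  have "(CARD('a) - 1) div d < CARD('a) - 1"
    using assms(1) two_le_card_field[where 'a = 'a] by (intro div_less_dividend) auto
  then have "card (nonzero_powers d :: 'a set) < card (UNIV - {0::'a})"
    using assms nonzero_powers_eq_roots_of_unity(2)[where 'a = 'a] by (simp add: card_Diff_singleton)
  then have "\<not> UNIV - {0::'a} \<subseteq> nonzero_powers d"
    using card_mono[OF finite] by (meson leD)
  then show ?thesis
    by blast
qed

lemma gp_clique_diff_in_nonzero_powers:
  assumes "gp_clique d S" and "x \<in> S" and "y \<in> S" and "x \<noteq> y"
  shows "x - y \<in> nonzero_powers d"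
  using assms by (auto simp: gp_clique_def gp_adj_iff_nonzero_powers)

lemma gp_clique_translate:
  assumes "gp_clique d S" and "a \<in> S"
  shows "gp_clique d ((\<lambda>x. x - a) ` S)" and "0 \<in> (\<lambda>x. x - a) ` S"
    and "card ((\<lambda>x. x - a) ` S) = card S"
  using assms by (auto simp: gp_clique_def gp_adj_iff_nonzero_powers card_image inj_on_def)

lemma inj_on_gp_clique_diff_mult:
  assumes "gp_clique d S" and "c \<noteq> 0" and "c \<notin> nonzero_powers d"
  shows "inj_on (\<lambda>(x, y). x - c * y) (S \<times> S)"
proof (rule inj_onI, clarsimp)
  fix x1 y1 x2 y2
  assume mem: "x1 \<in> S" "y1 \<in> S" "x2 \<in> S" "y2 \<in> S" and eq: "x1 - c * y1 = x2 - c * y2"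
  then have diff: "x1 - x2 = c * (y1 - y2)"
    by (simp add: algebra_simps)
  show "x1 = x2 \<and> y1 = y2"
  proof (rule ccontr)
    assume "\<not> (x1 = x2 \<and> y1 = y2)"
    then have "y1 \<noteq> y2" and "x1 \<noteq> x2"
      using diff assms(2) by auto
    then have "(x1 - x2) / (y1 - y2) \<in> nonzero_powers d"
      using assms(1) mem by (intro nonzero_powers_divide gp_clique_diff_in_nonzero_powers)
    then show False
      using diff \<open>y1 \<noteq> y2\<close> assms(3) by simp
  qed
qed

lemma card_gp_clique_square_le:
  fixes S :: "'a::{field,finite} set" and c :: 'a
  assumes "gp_clique d S" and "c \<noteq> 0" and "c \<notin> nonzero_powers d"
  shows "card S * card S \<le> CARD('a)"
proof -
  have "card S * card S = card ((\<lambda>(x, y). x - c * y) ` (S \<times> S))"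
    using card_image[OF inj_on_gp_clique_diff_mult[OF assms]] by (simp add: card_cartesian_product)
  also have "\<dots> \<le> CARD('a)"
    by (rule card_mono) auto
  finally show ?thesis .
qed

lemma gp_clique_diff_mult_surj:
  fixes S :: "'a::{field,finite} set" and c :: 'a
  assumes "gp_clique d S" and "c \<noteq> 0" and "c \<notin> nonzero_powers d"
    and "card S * card S = CARD('a)"
  shows "(\<lambda>(x, y). x - c * y) ` (S \<times> S) = UNIV"
proof -
  have "card ((\<lambda>(x, y). x - c * y) ` (S \<times> S)) = CARD('a)"
    using card_image[OF inj_on_gp_clique_diff_mult[OF assms(1-3)]] assms(4)
    by (simp add: card_cartesian_product)
  then show ?thesis
    by (metis card_subset_eq finite subset_UNIV)
qed

lemma coset_nonzero_powers_disjoint: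
  assumes "c0 \<noteq> 0" and "c0 \<notin> nonzero_powers d" and "c \<in> (*) c0 ` nonzero_powers d"
  shows "c \<noteq> 0" and "c \<notin> nonzero_powers d"
proof -
  obtain u where u: "u \<in> nonzero_powers d" "c = c0 * u"
    using assms(3) by blast
  then have "u \<noteq> 0"
    using zero_notin_nonzero_powers by blast
  then show "c \<noteq> 0"
    using u assms(1) by simp
  show "c \<notin> nonzero_powers d"
  proof
    assume "c \<in> nonzero_powers d"
    then have "c / u \<in> nonzero_powers d"
      using u(1) by (rule nonzero_powers_divide)
    then show False
      using u \<open>u \<noteq> 0\<close> assms(2) by simp
  qed
qed

lemma bij_betw_gp_clique_coset:
  fixes S :: "'a::{field,finite} set"
  assumes clique: "gp_clique d S" and "0 \<in> S" and "z \<notin> S"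
    and card: "card S * card S = CARD('a)" and c0: "c0 \<noteq> 0" "c0 \<notin> nonzero_powers d"
  defines "C \<equiv> (*) c0 ` nonzero_powers d"
  shows "bij_betw (\<lambda>(x, y). (x - z) / y) ({x \<in> S. x - z \<in> C} \<times> (S - {0})) C"
proof (rule bij_betw_imageI)
  have residue: "y \<in> nonzero_powers d" if "y \<in> S - {0}" for y
    using gp_clique_diff_in_nonzero_powers[OF clique, of y 0] that \<open>0 \<in> S\<close> by simp
  have C_mult: "a * y \<in> C" and C_divide: "a / y \<in> C"
    if "a \<in> C" and "y \<in> nonzero_powers d" for a y
  proof -
    obtain u where u: "u \<in> nonzero_powers d" "a = c0 * u"
      using \<open>a \<in> C\<close> by (auto simp: C_def)
    show "a * y \<in> C"
      using u that(2) unfolding C_def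
      by (auto simp: mult.assoc intro!: image_eqI[of _ _ "u * y"] nonzero_powers_mult)
    show "a / y \<in> C"
      using u that(2) unfolding C_def
      by (auto intro!: image_eqI[of _ _ "u / y"] nonzero_powers_divide)
  qed
  have C_nonresidue: "c \<noteq> 0" "c \<notin> nonzero_powers d" if "c \<in> C" for c
    using coset_nonzero_powers_disjoint[OF c0] that by (auto simp: C_def)
  show "inj_on (\<lambda>(x, y). (x - z) / y) ({x \<in> S. x - z \<in> C} \<times> (S - {0}))"
  proof (rule inj_onI)
    fix p1 p2
    assume "p1 \<in> {x \<in> S. x - z \<in> C} \<times> (S - {0})" and "p2 \<in> {x \<in> S. x - z \<in> C} \<times> (S - {0})"
      and eq: "(\<lambda>(x, y). (x - z) / y) p1 = (\<lambda>(x, y). (x - z) / y) p2"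
    from this(1,2) obtain x1 y1 x2 y2 where p: "p1 = (x1, y1)" "p2 = (x2, y2)"
      and mem: "x1 \<in> S" "x1 - z \<in> C" "y1 \<in> S" "y1 \<noteq> 0" "x2 \<in> S" "y2 \<in> S" "y2 \<noteq> 0"
      by (cases p1, cases p2) simp
    define c where "c = (x1 - z) / y1"
    have "c \<in> C"
      using mem residue by (simp add: c_def C_divide)
    have "x1 - c * y1 = z"
      using mem by (simp add: c_def)
    moreover have "x2 - c * y2 = z"
      using mem eq by (simp add: c_def p)
    ultimately have "(\<lambda>(x, y). x - c * y) (x1, y1) = (\<lambda>(x, y). x - c * y) (x2, y2)"
      by simp
    then show "p1 = p2"
      unfolding p
      by (rule inj_onD[OF inj_on_gp_clique_diff_mult[OF clique C_nonresidue[OF \<open>c \<in> C\<close>]]])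
        (use mem in auto)
  qed
  show "(\<lambda>(x, y). (x - z) / y) ` ({x \<in> S. x - z \<in> C} \<times> (S - {0})) = C"
  proof
    show "(\<lambda>(x, y). (x - z) / y) ` ({x \<in> S. x - z \<in> C} \<times> (S - {0})) \<subseteq> C"
      using residue C_divide by auto
    show "C \<subseteq> (\<lambda>(x, y). (x - z) / y) ` ({x \<in> S. x - z \<in> C} \<times> (S - {0}))"
    proof
      fix c assume "c \<in> C"
      then have "z \<in> (\<lambda>(x, y). x - c * y) ` (S \<times> S)"
        using gp_clique_diff_mult_surj[OF clique C_nonresidue[OF \<open>c \<in> C\<close>] card] by simp
      then obtain x y where xy: "x \<in> S" "y \<in> S" "z = x - c * y"
        by auto
      then have "y \<in> S - {0}"
        using \<open>z \<notin> S\<close> by auto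
      then have "x - z \<in> C" and "(x - z) / y = c"
        using C_mult[OF \<open>c \<in> C\<close> residue] xy(3) by simp_all
      then show "c \<in> (\<lambda>(x, y). (x - z) / y) ` ({x \<in> S. x - z \<in> C} \<times> (S - {0}))"
        using xy(1) \<open>y \<in> S - {0}\<close> by (auto intro!: image_eqI[of _ _ "(x, y)"])
    qed
  qed
qed

lemma dvd_card_gp_clique_succ:
  fixes S :: "'a::{field,finite} set"
  assumes clique: "gp_clique d S" and card: "card S * card S = CARD('a)"
    and "1 < d" and dvd: "d dvd CARD('a) - 1"
  shows "d dvd card S + 1"
proof -
  define m where "m = card S"
  have "2 \<le> m"
    using two_le_sqrt_card card by (simp add: m_def)
  then obtain a where "a \<in> S"
    unfolding m_def by fastforce
  define T where "T = (\<lambda>x. x - a) ` S"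
  have T: "gp_clique d T" "0 \<in> T" "card T = m"
    using gp_clique_translate[OF clique \<open>a \<in> S\<close>] by (simp_all add: T_def m_def)
  have "m * 1 < m * m"
    using \<open>2 \<le> m\<close> by (intro mult_strict_left_mono) auto
  then have "T \<noteq> UNIV"
    using T(3) card by (auto simp: m_def)
  then obtain z where "z \<notin> T"
    by blast
  obtain c0 :: 'a where c0: "c0 \<noteq> 0" "c0 \<notin> nonzero_powers d"
    using exists_notin_nonzero_powers[OF \<open>1 < d\<close> dvd] by blast
  define C where "C = (*) c0 ` nonzero_powers d"
  define N where "N = {x \<in> T. x - z \<in> C}"
  have "card (N \<times> (T - {0})) = card C"
    using bij_betw_same_card[OF bij_betw_gp_clique_coset[OF T(1,2) \<open>z \<notin> T\<close> _ c0]] T(3) card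
    by (simp add: C_def N_def m_def)
  also have "card C = (CARD('a) - 1) div d"
    using c0(1) nonzero_powers_eq_roots_of_unity(2)[OF _ dvd] \<open>1 < d\<close>
    by (simp add: C_def card_image inj_on_def)
  finally have "card N * (m - 1) * d = CARD('a) - 1"
    using T(2,3) dvd by (simp add: card_cartesian_product)
  also have "CARD('a) - 1 = (m + 1) * (m - 1)"
    using card by (simp add: m_def algebra_simps diff_mult_distrib)
  finally have "(card N * d) * (m - 1) = (m + 1) * (m - 1)"
    by (simp only: mult_ac)
  then have "card N * d = m + 1"
    using mult_right_cancel[of "m - 1"] \<open>2 \<le> m\<close> by fastforce
  then show ?thesis
    unfolding m_def by (metis dvd_triv_right)
qed

lemma power_diff_self_mult_sum:
  fixes a :: "'a::comm_ring_1"
  assumes "0 < m"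
  shows "(a ^ m - a) * (\<Sum>j\<le>m. (a ^ (m - 1)) ^ j) = a ^ (m * m) - a"
proof -
  have "a ^ m - a = a * (a ^ (m - 1) - 1)"
    using assms by (cases m) (simp_all add: algebra_simps)
  moreover have "(a ^ (m - 1) - 1) * (\<Sum>j\<le>m. (a ^ (m - 1)) ^ j) = (a ^ (m - 1)) ^ Suc m - 1"
    using power_diff_1_eq[of "a ^ (m - 1)" "Suc m"] by (simp add: lessThan_Suc_atMost)
  moreover have "Suc ((m - 1) * Suc m) = m * m"
    using assms by (cases m) (simp_all add: algebra_simps)
  ultimately show ?thesis
    by (metis (no_types, lifting) mult.assoc power_Suc power_mult right_diff_distrib mult_1_right)
qed

lemma card_power_fixed_points_ge:
  assumes card: "m * m = CARD('a::{field,finite})"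
  shows "m \<le> card {x::'a. x ^ m = x}"
proof -
  let ?K = "{x::'a. x ^ m = x}"
  have "2 \<le> m"
    using two_le_sqrt_card[OF card] .
  \<comment> \<open>Every element is a root of \<open>X\<^sup>q - X = (X\<^sup>m - X) h\<close>, and \<open>h\<close> has at most \<open>(m - 1) m\<close> roots.\<close>
  define h where "h = (\<Sum>j\<le>m. monom (1::'a) ((m - 1) * j))"
  have poly_h: "poly h a = (\<Sum>j\<le>m. (a ^ (m - 1)) ^ j)" for a
    by (simp add: h_def poly_sum poly_monom power_mult)
  have "poly h 0 = 1"
    using \<open>2 \<le> m\<close> by (simp add: poly_h power_0_left sum.atMost_shift)
  then have "h \<noteq> 0"
    by auto
  have "degree h \<le> (m - 1) * m"
    unfolding h_def by (rule degree_sum_le) (auto intro: order_trans[OF degree_monom_le])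
  have "UNIV \<subseteq> ?K \<union> {a. poly h a = 0}"
  proof
    fix a :: 'a
    have "(a ^ m - a) * poly h a = 0"
      using power_diff_self_mult_sum[of m a] \<open>2 \<le> m\<close> finite_field_power_card[of a] card
      by (simp add: poly_h)
    then show "a \<in> ?K \<union> {a. poly h a = 0}"
      by auto
  qed
  then have "CARD('a) \<le> card ?K + card {a. poly h a = 0}"
    by (metis card_Un_le card_mono finite le_trans)
  also have "card {a. poly h a = 0} \<le> (m - 1) * m"
    using card_poly_roots_bound[OF \<open>h \<noteq> 0\<close>] \<open>degree h \<le> (m - 1) * m\<close> by linarith
  finally show ?thesis
    using card \<open>2 \<le> m\<close> by (cases m) simp_all
qed

lemma gp_clique_power_fixed_points:
  assumes "m = CHAR('a::{field,finite}) ^ k" and card: "m * m = CARD('a)" and "d dvd m + 1"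
  shows "gp_clique d {x::'a. x ^ m = x}"
  unfolding gp_clique_def gp_adj_iff_nonzero_powers
proof (intro ballI impI)
  fix x y :: 'a
  assume "x \<in> {x. x ^ m = x}" and "y \<in> {x. x ^ m = x}" and "x \<noteq> y"
  have "0 < m"
    using two_le_sqrt_card[OF card] by simp
  have "(x - y) ^ m = x - y"
    using power_CHAR_power_diff[OF prime_CHAR_finite_field assms(1)] \<open>x \<in> _\<close> \<open>y \<in> _\<close> by simp
  moreover have "(x - y) ^ m = (x - y) * (x - y) ^ (m - 1)"
    using \<open>0 < m\<close> by (cases m) simp_all
  ultimately have "(x - y) * (x - y) ^ (m - 1) = (x - y) * 1"
    by simp
  then have root: "(x - y) ^ (m - 1) = 1"
    using \<open>x \<noteq> y\<close> by simp
  have "0 < d"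
    using \<open>d dvd m + 1\<close> by (cases d) auto
  obtain r where r: "m + 1 = d * r"
    using \<open>d dvd m + 1\<close> by blast
  have "CARD('a) - 1 = (m + 1) * (m - 1)"
    using card by (simp add: algebra_simps diff_mult_distrib)
  also have "\<dots> = d * ((m - 1) * r)"
    using r by simp
  finally have "CARD('a) - 1 = d * ((m - 1) * r)" .
  then have "(CARD('a) - 1) div d = (m - 1) * r" and "d dvd CARD('a) - 1"
    using \<open>0 < d\<close> by simp_all
  then show "x \<noteq> y \<and> x - y \<in> nonzero_powers d"
    using nonzero_powers_eq_roots_of_unity(1)[where 'a = 'a, OF \<open>0 < d\<close>] root \<open>x \<noteq> y\<close>
    by (simp add: power_mult)
qed

lemma finite_gp_clique_cards: "finite {card S | S :: 'a::{field,finite} set. gp_clique d S}"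
  by (rule finite_subset[of _ "{..CARD('a)}"]) (auto intro: card_mono)

lemma card_le_gp_clique_number:
  fixes S :: "'a::{field,finite} set"
  assumes "gp_clique d S"
  shows "card S \<le> gp_clique_number TYPE('a) d"
  unfolding gp_clique_number_def using assms finite_gp_clique_cards by (auto intro: Max_ge)

lemma gp_clique_number_attained:
  obtains S :: "'a::{field,finite} set"
  where "gp_clique d S" and "card S = gp_clique_number TYPE('a) d"
proof -
  have "gp_clique d ({} :: 'a set)"
    by (simp add: gp_clique_def)
  then have "gp_clique_number TYPE('a) d \<in> {card S | S :: 'a set. gp_clique d S}"
    unfolding gp_clique_number_def using finite_gp_clique_cards by (intro Max_in) auto
  then show ?thesis
    using that by auto
qed

lemma gp_clique_number_le_sqrt_card:
  assumes "m * m = CARD('a::{field,finite})" and "1 < d" and "d dvd CARD('a) - 1"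
  shows "gp_clique_number TYPE('a) d \<le> m"
proof -
  obtain S :: "'a set" where S: "gp_clique d S" "card S = gp_clique_number TYPE('a) d"
    by (rule gp_clique_number_attained)
  obtain c :: 'a where "c \<noteq> 0" "c \<notin> nonzero_powers d"
    using exists_notin_nonzero_powers[OF assms(2,3)] by blast
  then have "card S * card S \<le> m * m"
    using card_gp_clique_square_le[OF S(1)] assms(1) by simp
  then show ?thesis
    using S(2) mult_strict_mono[of m "card S" m "card S"] by (cases "m < card S") auto
qed

lemma gp_clique_number_eq_sqrt_card_iff:
  assumes "m = CHAR('a::{field,finite}) ^ k" and "m * m = CARD('a)"
    and "1 < d" and "d dvd CARD('a) - 1"
  shows "gp_clique_number TYPE('a) d = m \<longleftrightarrow> d dvd m + 1"
proof
  assume "gp_clique_number TYPE('a) d = m"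
  then obtain S :: "'a set" where "gp_clique d S" "card S = m"
    using gp_clique_number_attained by metis
  then show "d dvd m + 1"
    using dvd_card_gp_clique_succ assms(2-4) by metis
next
  assume "d dvd m + 1"
  have "m \<le> card {x::'a. x ^ m = x}"
    using card_power_fixed_points_ge[OF assms(2)] .
  also have "\<dots> \<le> gp_clique_number TYPE('a) d"
    using card_le_gp_clique_number gp_clique_power_fixed_points[OF assms(1,2) \<open>d dvd m + 1\<close>] .
  finally show "gp_clique_number TYPE('a) d = m"
    using gp_clique_number_le_sqrt_card[OF assms(2-4)] by simp
qed

lemma gp_clique_number_sqrt_card:
  fixes p k d :: nat
  assumes "prime p" and card: "CARD('a::{field,finite}) = p ^ (2 * k)"
    and "1 < d" and "d dvd CARD('a) - 1"
  shows "real (gp_clique_number TYPE('a) d) \<le> sqrt (real CARD('a))"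
    and "real (gp_clique_number TYPE('a) d) = sqrt (real CARD('a)) \<longleftrightarrow> d dvd p ^ k + 1"
proof -
  define m where "m = p ^ k"
  have "CARD('a) = m * m"
    using card by (simp add: m_def mult_2 power_add)
  then have square: "m * m = CARD('a)" and sqrt_card: "sqrt (real CARD('a)) = real m"
    by (simp_all only: of_nat_mult real_sqrt_abs2 abs_of_nat)
  have "m = CHAR('a) ^ k"
    using CHAR_eq_if_card_eq_prime_power[OF assms(1) card] by (simp add: m_def)
  then show "real (gp_clique_number TYPE('a) d) \<le> sqrt (real CARD('a))"
    and "real (gp_clique_number TYPE('a) d) = sqrt (real CARD('a)) \<longleftrightarrow> d dvd p ^ k + 1"
    using gp_clique_number_le_sqrt_card[OF square assms(3,4)]
      gp_clique_number_eq_sqrt_card_iff[OF _ square assms(3,4)] sqrt_card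
    by (simp_all add: m_def)
qed

lemma two_mul_dvd_if_minimal_cong_minus_one:
  fixes x n :: int and t v :: nat
  assumes "\<not> [1 = -1] (mod n)" and "[x ^ t = -1] (mod n)"
    and minimal: "\<forall>t'. 0 < t' \<and> t' < t \<longrightarrow> \<not> [x ^ t' = -1] (mod n)"
    and "[x ^ v = 1] (mod n)"
  shows "2 * t dvd v"
proof -
  have cancel: "[x ^ b = c] (mod n)" if "[x ^ a = u] (mod n)" "[x ^ (a + b) = u * c] (mod n)"
    and "u = 1 \<or> u = -1" for a b c u
  proof -
    have "[u * x ^ b = u * c] (mod n)"
      using that(1,2) cong_scalar_right[OF that(1), of "x ^ b"]
      by (metis cong_sym cong_trans mult.commute power_add)
    then have "[u * (u * x ^ b) = u * (u * c)] (mod n)"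
      by (rule cong_scalar_left)
    then show ?thesis
      using that(3) by auto
  qed
  have "t > 0"
    using assms(1,2) by (cases t) auto
  define b where "b = v mod (2 * t)"
  have "[x ^ (2 * t) = 1] (mod n)"
    using cong_pow[OF assms(2), of 2] by (simp add: power_mult mult.commute)
  then have "[x ^ (2 * t * (v div (2 * t))) = 1] (mod n)"
    using cong_pow by (fastforce simp: power_mult)
  then have xb: "[x ^ b = 1] (mod n)"
    using cancel[of "2 * t * (v div (2 * t))" 1 b 1] assms(4) by (simp add: b_def)
  have "b < 2 * t"
    using \<open>t > 0\<close> by (simp add: b_def)
  have "b = 0"
  proof (rule ccontr)
    assume "b \<noteq> 0"
    show False
    proof (cases "b < t")
      case True
      then have "[x ^ (t - b) = -1] (mod n)"
        using cancel[of b 1 "t - b" "-1"] xb assms(2) by simp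
      then show False
        using minimal True \<open>b \<noteq> 0\<close> by auto
    next
      case False
      then have "[x ^ (b - t) = -1] (mod n)"
        using cancel[of t "-1" "b - t" "-1"] xb assms(2) by simp
      then show False
        using minimal assms(1) \<open>b < 2 * t\<close> False by (cases "b = t") auto
    qed
  qed
  then show ?thesis
    by (simp add: b_def mod_eq_0_iff_dvd)
qed

lemma not_cong_one_minus_one:
  assumes "2 < n"
  shows "\<not> [1 = -1] (mod int n)"
proof -
  have "\<not> int n dvd 2"
    using assms zdvd_imp_le[of "int n" 2] by linarith
  then show ?thesis
    by (simp add: cong_iff_dvd_diff)
qed

lemma dvd_succ_iff_cong_minus_one: "d dvd m + 1 \<longleftrightarrow> [int m = -1] (mod int d)"
proof -
  have "int m - -1 = int (m + 1)"
    by simp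
  then show ?thesis
    by (simp only: cong_iff_dvd_diff of_nat_dvd_iff)
qed

lemma dvd_power_mult_succ_iff_odd:
  fixes d p t s :: nat
  assumes not_cong: "\<not> [1 = -1] (mod int d)" and "[int p ^ t = -1] (mod int d)"
  shows "d dvd p ^ (t * s) + 1 \<longleftrightarrow> odd s"
proof -
  have p_cong: "[int (p ^ (t * s)) = (- 1) ^ s] (mod int d)"
    using cong_pow[OF assms(2), of s] by (simp add: power_mult)
  show ?thesis
  proof (cases "even s")
    case True
    then have "[int (p ^ (t * s)) = 1] (mod int d)"
      using p_cong by simp
    then show ?thesis
      using True not_cong dvd_succ_iff_cong_minus_one by (metis cong_sym cong_trans)
  next
    case False
    then show ?thesis
      using p_cong dvd_succ_iff_cong_minus_one by simp
  qed
qed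

theorem proposition4p6:
  fixes p d t v :: nat
  assumes "prime p" and "odd p"
    and "odd d" and "d \<ge> 3"
    and "t > 0" and "[int p ^ t = -1] (mod int d)"
    and "\<forall>t'. 0 < t' \<and> t' < t \<longrightarrow> \<not> [int p ^ t' = -1] (mod int d)"
    and "v > 0" and "[p ^ v = 1] (mod (2 * d))"
    and "card (UNIV :: 'a::{field,finite} set) = p ^ v"
  shows "\<exists>s>0. v = 2 * t * s
           \<and> (even s \<longrightarrow> real (gp_clique_number TYPE('a) d) < sqrt (real (p ^ v)))
           \<and> (odd s \<longrightarrow> d dvd (p ^ (t * s) + 1)
                 \<and> real (gp_clique_number TYPE('a) d) = sqrt (real (p ^ v)))"
proof -
  have not_cong: "\<not> [1 = -1] (mod int d)"
    using \<open>d \<ge> 3\<close> by (intro not_cong_one_minus_one) simp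
  have "[int p ^ v = 1] (mod int d)"
    using cong_dvd_modulus_nat[OF assms(9), of d] cong_int_iff[of "p ^ v" 1 d] by simp
  then obtain s where v: "v = 2 * t * s"
    using two_mul_dvd_if_minimal_cong_minus_one[OF not_cong assms(6,7)] by blast
  have card: "CARD('a) = p ^ (2 * (t * s))"
    using assms(10) v by (simp add: mult.assoc)
  have "d dvd CARD('a) - 1"
    using dvd_mult_right[OF cong_to_1_nat[OF assms(9)]] assms(10) by simp
  then have clique_number: "real (gp_clique_number TYPE('a) d) \<le> sqrt (real (p ^ v))"
      "real (gp_clique_number TYPE('a) d) = sqrt (real (p ^ v)) \<longleftrightarrow> d dvd p ^ (t * s) + 1"
    using gp_clique_number_sqrt_card[OF assms(1) card _ \<open>d dvd CARD('a) - 1\<close>] assms(10) \<open>d \<ge> 3\<close>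
    by simp_all
  have parity: "d dvd p ^ (t * s) + 1 \<longleftrightarrow> odd s"
    using dvd_power_mult_succ_iff_odd[OF not_cong assms(6)] .
  show ?thesis
  proof (intro exI[of _ s] conjI impI)
    show "s > 0" and "v = 2 * t * s"
      using \<open>v > 0\<close> v by simp_all
  next
    assume "even s"
    then have "real (gp_clique_number TYPE('a) d) \<noteq> sqrt (real (p ^ v))"
      using clique_number(2) parity by simp
    then show "real (gp_clique_number TYPE('a) d) < sqrt (real (p ^ v))"
      using clique_number(1) by simp
  next
    assume "odd s"
    then show "d dvd p ^ (t * s) + 1"
      using parity by simp
    then show "real (gp_clique_number TYPE('a) d) = sqrt (real (p ^ v))"
      using clique_number(2) by simp
  qed
qed

end
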